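(* For every $k\ge 1$, $$B_k'=\{[f,l]: f\in B_k,\ l\in G_k\}=\{[l,f]: f\in B_k,\ l\in G_k\}.$$
   Context: $B_k\cong\wr_{i=1}^kC_2\cong\mathrm{Syl}_2(S_{2^k})$ is the automorphism group of the binary rooted tree of depth $k$, and $G_k\le B_k$ is the subgroup of automorphisms acting by even permutations on the $2^k$ leaves ($G_k\cong\mathrm{Syl}_2(A_{2^k})$). $[a,b]=aba^{-1}b^{-1}$. *)

theory Defs
  imports "HOL-Algebra.Algebra" "HOL-Combinatorics.Permutations"
begin

text \<open>The binary rooted tree of depth k: vertices are the binary words (bool lists)
  of length at most k; the root is the empty word; the parent of a nonempty word
  is obtained by deleting its last letter.\<close>

definition tree_vertices :: "nat \<Rightarrow> bool list set" where
  "tree_vertices k = {xs. length xs \<le> k}"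

definition tree_leaves :: "nat \<Rightarrow> bool list set" where
  "tree_leaves k = {xs. length xs = k}"

definition tree_aut :: "nat \<Rightarrow> (bool list \<Rightarrow> bool list) \<Rightarrow> bool" where
  "tree_aut k f \<longleftrightarrow> f permutes tree_vertices k \<and>
     (\<forall>xs \<in> tree_vertices k. xs \<noteq> [] \<longrightarrow> f (butlast xs) = butlast (f xs))"

definition B :: "nat \<Rightarrow> (bool list \<Rightarrow> bool list) monoid" where
  "B k = \<lparr> carrier = {f. tree_aut k f}, monoid.mult = (\<lambda>f g. f \<circ> g), one = id \<rparr>"

definition leaf_action :: "nat \<Rightarrow> (bool list \<Rightarrow> bool list) \<Rightarrow> (bool list \<Rightarrow> bool list)" where
  "leaf_action k f = (\<lambda>xs. if xs \<in> tree_leaves k then f xs else xs)"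

definition G :: "nat \<Rightarrow> (bool list \<Rightarrow> bool list) set" where
  "G k = {f \<in> carrier (B k). evenperm (leaf_action k f)}"

definition comm :: "nat \<Rightarrow> (bool list \<Rightarrow> bool list) \<Rightarrow> (bool list \<Rightarrow> bool list) \<Rightarrow> (bool list \<Rightarrow> bool list)" where
  "comm k a b = a \<otimes>\<^bsub>B k\<^esub> b \<otimes>\<^bsub>B k\<^esub> inv\<^bsub>B k\<^esub> a \<otimes>\<^bsub>B k\<^esub> inv\<^bsub>B k\<^esub> b"

end

theory Submission
  imports Defs "HOL-Library.Z2"
begin

text \<open>
  An automorphism of the binary tree is described by its vertex labels, which record whether it
  swaps the two children of a vertex. For each level i < k the sum of the labels on level i,
  taken in \<int>/2, is a homomorphism B_k \<rightarrow> \<int>/2; so every commutator lies in the common kernel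
  K_k of these level parities.

  Conversely, every g \<in> K_k is a commutator [p, m] in which m acts on level k as a single cycle,
  in the form that every \<int>/2-labelling of level k with even sum is a coboundary u + u \<circ> m.
  This goes by induction on the depth: if g \<in> K_(k+1) restricts to [p, m] on depth k, extend m
  by labels w on level k with odd sum, which keeps it a single cycle one level down, and extend
  p by labels u solving one coboundary equation, which is possible because g has parity 0 on
  level k. At the last level one may instead extend m by the trivial labels w = 0: it then acts
  on the leaves by one permutation of level k-1 on both children of each vertex, which is even,
  so it lies in G_k. Finally [f, l]\<inverse> = [l, f] gives the second description.
\<close>

(* Plain inv is taken by the group-inverse syntax of HOL-Algebra. *)
abbreviation finv :: "('a \<Rightarrow> 'b) \<Rightarrow> 'b \<Rightarrow> 'a" where
  "finv f \<equiv> inv_into UNIV f"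

lemma tree_aut_permutes: "tree_aut k f \<Longrightarrow> f permutes tree_vertices k"
  by (simp add: tree_aut_def)

lemma tree_aut_butlast:
  "tree_aut k f \<Longrightarrow> xs \<in> tree_vertices k \<Longrightarrow> xs \<noteq> [] \<Longrightarrow> f (butlast xs) = butlast (f xs)"
  by (simp add: tree_aut_def)

lemma tree_aut_Nil:
  assumes "tree_aut k f" shows "f [] = []"
proof -
  have perm: "f permutes tree_vertices k" using assms by (rule tree_aut_permutes)
  have nonempty: "f xs \<noteq> []" if "xs \<in> tree_vertices k" "xs \<noteq> []" for xs
  proof
    assume "f xs = []"
    then have "f (butlast xs) = f xs" using tree_aut_butlast[OF assms that] by simp
    then have "butlast xs = xs" using permutes_inj[OF perm] by (simp add: inj_eq)
    then show False using that(2) by (cases xs rule: rev_exhaust) auto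
  qed
  have root: "[] \<in> tree_vertices k" by (simp add: tree_vertices_def)
  then obtain ys where ys: "f ys = []" using permutes_surj[OF perm] by (metis surjD)
  have "ys \<in> tree_vertices k" using ys permutes_not_in[OF perm, of ys] root by auto
  then show ?thesis using nonempty ys by blast
qed

lemma tree_aut_length:
  assumes "tree_aut k f" shows "length (f xs) = length xs"
proof (induction xs rule: rev_induct)
  case Nil
  then show ?case using tree_aut_Nil[OF assms] by simp
next
  case (snoc x ys)
  have perm: "f permutes tree_vertices k" using assms by (rule tree_aut_permutes)
  show ?case
  proof (cases "ys @ [x] \<in> tree_vertices k")
    case False
    then show ?thesis using permutes_not_in[OF perm] by simp
  next
    case True
    have "f (ys @ [x]) \<noteq> f []" using permutes_inj[OF perm] by (simp add: inj_eq)
    then have "f (ys @ [x]) \<noteq> []" using tree_aut_Nil[OF assms] by simp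
    then show ?thesis using tree_aut_butlast[OF assms True] snoc
      by (cases "f (ys @ [x])" rule: rev_exhaust) auto
  qed
qed

lemma tree_aut_bij_leaves:
  assumes "tree_aut k f" shows "bij_betw f (tree_leaves i) (tree_leaves i)"
proof -
  have perm: "f permutes tree_vertices k" using assms by (rule tree_aut_permutes)
  have "f ` tree_leaves i = tree_leaves i"
  proof
    show "f ` tree_leaves i \<subseteq> tree_leaves i"
      using tree_aut_length[OF assms] by (auto simp: tree_leaves_def)
    show "tree_leaves i \<subseteq> f ` tree_leaves i"
    proof
      fix y assume y: "y \<in> tree_leaves i"
      obtain x where "f x = y" using permutes_surj[OF perm] by (metis surjD)
      then show "y \<in> f ` tree_leaves i"
        using y tree_aut_length[OF assms, of x] by (auto simp: tree_leaves_def)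
    qed
  qed
  then show ?thesis
    using permutes_inj[OF perm] by (auto simp: bij_betw_def intro: inj_on_subset[OF _ subset_UNIV])
qed

lemma tree_aut_id: "tree_aut k id"
  by (simp add: tree_aut_def permutes_id)

lemma tree_aut_comp:
  assumes "tree_aut k f" "tree_aut k g" shows "tree_aut k (f \<circ> g)"
  unfolding tree_aut_def
proof (intro conjI ballI impI)
  show "f \<circ> g permutes tree_vertices k"
    using assms by (simp add: tree_aut_permutes permutes_compose)
  fix xs assume xs: "xs \<in> tree_vertices k" "xs \<noteq> []"
  have "g xs \<in> tree_vertices k" "g xs \<noteq> []"
    using xs tree_aut_length[OF assms(2), of xs] by (auto simp: tree_vertices_def)
  then show "(f \<circ> g) (butlast xs) = butlast ((f \<circ> g) xs)"
    using tree_aut_butlast[OF assms(1)] tree_aut_butlast[OF assms(2) xs] by simp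
qed

lemma tree_aut_inv:
  assumes "tree_aut k f" shows "tree_aut k (finv f)"
  unfolding tree_aut_def
proof (intro conjI ballI impI)
  have perm: "f permutes tree_vertices k" using assms by (rule tree_aut_permutes)
  show "finv f permutes tree_vertices k" using permutes_inv[OF perm] .
  fix xs assume xs: "xs \<in> tree_vertices k" "xs \<noteq> []"
  define ys where "ys = finv f xs"
  have f_ys: "f ys = xs" unfolding ys_def using permutes_inverses(1)[OF perm] by simp
  then have "length ys = length xs" using tree_aut_length[OF assms, of ys] by simp
  then have "ys \<in> tree_vertices k" "ys \<noteq> []" using xs by (auto simp: tree_vertices_def)
  then have "f (butlast ys) = butlast xs" using tree_aut_butlast[OF assms] f_ys by simp
  then show "finv f (butlast xs) = butlast (finv f xs)"
    using permutes_inverses(2)[OF perm, of "butlast ys"] unfolding ys_def by simp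
qed

lemma tree_aut_0: "tree_aut 0 g \<Longrightarrow> g = id"
proof (rule ext)
  fix xs assume g: "tree_aut 0 g"
  show "g xs = id xs"
  proof (cases "xs = []")
    case True
    then show ?thesis using tree_aut_Nil[OF g] by simp
  next
    case False
    then show ?thesis
      using permutes_not_in[OF tree_aut_permutes[OF g]] by (simp add: tree_vertices_def)
  qed
qed

lemma group_B: "group (B k)"
proof (rule groupI)
  fix x assume "x \<in> carrier (B k)"
  then have x: "tree_aut k x" by (simp add: B_def)
  have "finv x \<circ> x = id" using permutes_inv_o(2)[OF tree_aut_permutes[OF x]] .
  then show "\<exists>y\<in>carrier (B k). y \<otimes>\<^bsub>B k\<^esub> x = \<one>\<^bsub>B k\<^esub>"
    using tree_aut_inv[OF x] by (auto simp: B_def)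
qed (auto simp: B_def tree_aut_comp tree_aut_id o_assoc)

lemma inv_B:
  assumes "tree_aut k f" shows "inv\<^bsub>B k\<^esub> f = finv f"
proof -
  have "finv f \<circ> f = id" using permutes_inv_o(2)[OF tree_aut_permutes[OF assms]] .
  then show ?thesis using group.inv_equality[OF group_B] assms tree_aut_inv[OF assms]
    by (simp add: B_def)
qed

lemma comm_B:
  assumes "tree_aut k a" "tree_aut k b"
  shows "comm k a b = a \<circ> b \<circ> finv a \<circ> finv b"
  unfolding comm_def inv_B[OF assms(1)] inv_B[OF assms(2)] by (simp add: B_def)

section \<open>Vertex labels and level parities\<close>

definition vertex_label :: "(bool list \<Rightarrow> bool list) \<Rightarrow> bool list \<Rightarrow> bool" where
  "vertex_label f y = last (f (y @ [False]))"

lemma tree_aut_snoc: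
  assumes "tree_aut k f" "length y < k"
  shows "f (y @ [b]) = f y @ [b \<noteq> vertex_label f y]"
proof -
  have perm: "f permutes tree_vertices k" using assms(1) by (rule tree_aut_permutes)
  have child: "f (y @ [c]) = f y @ [last (f (y @ [c]))]" for c
  proof -
    have "y @ [c] \<in> tree_vertices k" using assms(2) by (simp add: tree_vertices_def)
    then have "f y = butlast (f (y @ [c]))" using tree_aut_butlast[OF assms(1)] by fastforce
    moreover have "f (y @ [c]) \<noteq> []" using tree_aut_length[OF assms(1), of "y @ [c]"] by auto
    ultimately show ?thesis by simp
  qed
  have "last (f (y @ [True])) \<noteq> last (f (y @ [False]))"
  proof
    assume "last (f (y @ [True])) = last (f (y @ [False]))"
    then have "f (y @ [True]) = f (y @ [False])" using child by metis
    then show False using permutes_inj[OF perm] by (simp add: inj_eq)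
  qed
  then show ?thesis using child[of b] unfolding vertex_label_def by (cases b) auto
qed

lemma vertex_label_comp:
  assumes "tree_aut k f" "tree_aut k g" "length y < k"
  shows "vertex_label (f \<circ> g) y = (vertex_label g y \<noteq> vertex_label f (g y))"
proof -
  have "(f \<circ> g) (y @ [False]) = f (g y @ [vertex_label g y])"
    using tree_aut_snoc[OF assms(2,3)] by simp
  also have "\<dots> = f (g y) @ [vertex_label g y \<noteq> vertex_label f (g y)]"
    using tree_aut_snoc[OF assms(1)] tree_aut_length[OF assms(2), of y] assms(3) by simp
  finally show ?thesis by (simp add: vertex_label_def)
qed

lemma of_bool_neq_bit: "(of_bool (a \<noteq> b) :: bit) = of_bool a + of_bool b"
  by (cases a; cases b) simp_all

definition level_parity :: "(bool list \<Rightarrow> bool list) \<Rightarrow> nat \<Rightarrow> bit" where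
  "level_parity f i = (\<Sum>y\<in>tree_leaves i. of_bool (vertex_label f y))"

lemma level_parity_comp:
  assumes "tree_aut k f" "tree_aut k g" "i < k"
  shows "level_parity (f \<circ> g) i = level_parity f i + level_parity g i"
proof -
  have "level_parity (f \<circ> g) i =
      (\<Sum>y\<in>tree_leaves i. of_bool (vertex_label g y) + of_bool (vertex_label f (g y)))"
    unfolding level_parity_def
    by (rule sum.cong) (auto simp: vertex_label_comp[OF assms(1,2)] of_bool_neq_bit
        tree_leaves_def assms(3))
  also have "\<dots> = level_parity g i + (\<Sum>y\<in>tree_leaves i. of_bool (vertex_label f (g y)))"
    unfolding level_parity_def by (rule sum.distrib)
  also have "(\<Sum>y\<in>tree_leaves i. of_bool (vertex_label f (g y))) = level_parity f i"
    unfolding level_parity_def using sum.reindex_bij_betw[OF tree_aut_bij_leaves[OF assms(2)]]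
    by simp
  finally show ?thesis by (simp only: add.commute)
qed

lemma level_parity_id: "level_parity id i = 0"
  by (simp add: level_parity_def vertex_label_def)

lemma level_parity_inv:
  assumes "tree_aut k f" "i < k" shows "level_parity (finv f) i = level_parity f i"
proof -
  have "0 = level_parity (f \<circ> finv f) i"
    using permutes_inv_o(1)[OF tree_aut_permutes[OF assms(1)]] level_parity_id by simp
  also have "\<dots> = level_parity f i + level_parity (finv f) i"
    using level_parity_comp[OF assms(1) tree_aut_inv[OF assms(1)] assms(2)] .
  finally show ?thesis by (cases "level_parity f i"; cases "level_parity (finv f) i") simp_all
qed

lemma level_parity_commutator:
  assumes "tree_aut k a" "tree_aut k b" "i < k"
  shows "level_parity (a \<circ> b \<circ> finv a \<circ> finv b) i = 0"
proof -
  note auts = assms(1,2) tree_aut_inv[OF assms(1)] tree_aut_inv[OF assms(2)]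
  have "level_parity (a \<circ> b \<circ> finv a \<circ> finv b) i =
      level_parity a i + level_parity b i + level_parity (finv a) i + level_parity (finv b) i"
    using auts assms(3) by (simp only: level_parity_comp[where k = k] tree_aut_comp)
  also have "\<dots> = (level_parity a i + level_parity a i) + (level_parity b i + level_parity b i)"
    using auts assms(3) by (simp only: level_parity_inv[where k = k] ac_simps)
  finally show ?thesis by simp
qed

definition parity_kernel :: "nat \<Rightarrow> (bool list \<Rightarrow> bool list) set" where
  "parity_kernel k = {g. tree_aut k g \<and> (\<forall>i<k. level_parity g i = 0)}"

lemma subgroup_parity_kernel: "subgroup (parity_kernel k) (B k)"
proof (rule group.subgroupI[OF group_B])
  show "parity_kernel k \<subseteq> carrier (B k)" by (auto simp: parity_kernel_def B_def)
  show "parity_kernel k \<noteq> {}" using tree_aut_id level_parity_id by (auto simp: parity_kernel_def)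
  fix a assume a: "a \<in> parity_kernel k"
  then have a_aut: "tree_aut k a" by (simp add: parity_kernel_def)
  show "inv\<^bsub>B k\<^esub> a \<in> parity_kernel k"
    using a tree_aut_inv[OF a_aut] level_parity_inv[OF a_aut]
    by (simp add: inv_B[OF a_aut] parity_kernel_def)
  fix b assume b: "b \<in> parity_kernel k"
  then have b_aut: "tree_aut k b" by (simp add: parity_kernel_def)
  show "a \<otimes>\<^bsub>B k\<^esub> b \<in> parity_kernel k"
    using a b tree_aut_comp[OF a_aut b_aut] level_parity_comp[OF a_aut b_aut]
    by (simp add: B_def parity_kernel_def)
qed

lemma derived_B_subset_parity_kernel: "derived (B k) (carrier (B k)) \<subseteq> parity_kernel k"
  unfolding derived_def
proof (rule group.generate_subgroup_incl[OF group_B _ subgroup_parity_kernel], rule subsetI)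
  fix x assume "x \<in> derived_set (B k) (carrier (B k))"
  then obtain a b where ab: "tree_aut k a" "tree_aut k b" and "x = comm k a b"
    by (auto simp: B_def comm_def)
  then have "x = a \<circ> b \<circ> finv a \<circ> finv b" by (simp add: comm_B)
  moreover have "tree_aut k (a \<circ> b \<circ> finv a \<circ> finv b)" using ab by (simp add: tree_aut_comp tree_aut_inv)
  ultimately show "x \<in> parity_kernel k"
    using level_parity_commutator[OF ab] by (simp add: parity_kernel_def)
qed

section \<open>Extending and restricting automorphisms by one level\<close>

definition tree_extend ::
    "nat \<Rightarrow> (bool list \<Rightarrow> bool) \<Rightarrow> (bool list \<Rightarrow> bool list) \<Rightarrow> bool list \<Rightarrow> bool list" where
  "tree_extend k u h = (\<lambda>xs. if length xs \<le> k then h xs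
      else if length xs = Suc k then h (butlast xs) @ [last xs \<noteq> u (butlast xs)] else xs)"

lemma tree_extend_comp:
  assumes "tree_aut k m"
  shows "tree_extend k u h \<circ> tree_extend k w m = tree_extend k (\<lambda>z. w z \<noteq> u (m z)) (h \<circ> m)"
proof (rule ext)
  fix xs
  have length_m: "length (m ys) = length ys" for ys by (rule tree_aut_length[OF assms])
  show "(tree_extend k u h \<circ> tree_extend k w m) xs = tree_extend k (\<lambda>z. w z \<noteq> u (m z)) (h \<circ> m) xs"
  proof (cases "length xs = Suc k")
    case True
    then show ?thesis using length_m[of "butlast xs"]
      by (cases "last xs"; cases "w (butlast xs)"; cases "u (m (butlast xs))")
        (simp_all add: tree_extend_def)
  next
    case False
    then show ?thesis using length_m[of xs] by (simp add: tree_extend_def)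
  qed
qed

lemma tree_extend_length: "tree_aut k h \<Longrightarrow> length (tree_extend k u h xs) = length xs"
  by (simp add: tree_extend_def tree_aut_length)

lemma tree_extend_id: "tree_extend k (\<lambda>_. False) id = id"
proof (rule ext)
  fix xs show "tree_extend k (\<lambda>_. False) id xs = id xs"
    by (cases xs rule: rev_exhaust) (auto simp: tree_extend_def)
qed

lemma tree_extend_cong:
  assumes "\<And>z. z \<in> tree_leaves k \<Longrightarrow> u z = u' z"
  shows "tree_extend k u h = tree_extend k u' h"
proof (rule ext)
  fix xs show "tree_extend k u h xs = tree_extend k u' h xs"
    using assms[of "butlast xs"] by (auto simp: tree_extend_def tree_leaves_def)
qed

lemma tree_extend_inverse:
  assumes "tree_aut k h"
  shows "tree_extend k u h \<circ> tree_extend k (\<lambda>z. u (finv h z)) (finv h) = id"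
    and "tree_extend k (\<lambda>z. u (finv h z)) (finv h) \<circ> tree_extend k u h = id"
proof -
  have perm: "h permutes tree_vertices k" using assms by (rule tree_aut_permutes)
  have "tree_extend k u h \<circ> tree_extend k (\<lambda>z. u (finv h z)) (finv h)
      = tree_extend k (\<lambda>_. False) (h \<circ> finv h)"
    using tree_extend_comp[OF tree_aut_inv[OF assms]] by simp
  then show "tree_extend k u h \<circ> tree_extend k (\<lambda>z. u (finv h z)) (finv h) = id"
    using permutes_inv_o(1)[OF perm] tree_extend_id by simp
  have "tree_extend k (\<lambda>z. u (finv h z)) (finv h) \<circ> tree_extend k u h
      = tree_extend k (\<lambda>_. False) (finv h \<circ> h)"
    using tree_extend_comp[OF assms] permutes_inverses(2)[OF perm] by simp
  then show "tree_extend k (\<lambda>z. u (finv h z)) (finv h) \<circ> tree_extend k u h = id"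
    using permutes_inv_o(2)[OF perm] tree_extend_id by simp
qed

lemma tree_extend_inv:
  "tree_aut k h \<Longrightarrow> finv (tree_extend k u h) = tree_extend k (\<lambda>z. u (finv h z)) (finv h)"
  by (rule inv_unique_comp[OF tree_extend_inverse])

lemma tree_aut_extend:
  assumes "tree_aut k h" shows "tree_aut (Suc k) (tree_extend k u h)"
  unfolding tree_aut_def
proof (intro conjI ballI impI)
  let ?f = "tree_extend k u h" and ?g = "tree_extend k (\<lambda>z. u (finv h z)) (finv h)"
  have "bij_betw ?f (tree_vertices (Suc k)) (tree_vertices (Suc k))"
    using tree_extend_inverse[OF assms]
      tree_extend_length[OF assms] tree_extend_length[OF tree_aut_inv[OF assms]]
    by (intro bij_betw_byWitness[where f' = ?g]) (auto simp: tree_vertices_def fun_eq_iff)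
  moreover have "?f x = x" if "x \<notin> tree_vertices (Suc k)" for x
    using that by (simp add: tree_extend_def tree_vertices_def)
  ultimately show "?f permutes tree_vertices (Suc k)" by (rule bij_imp_permutes)
  fix xs assume xs: "xs \<in> tree_vertices (Suc k)" "xs \<noteq> []"
  show "?f (butlast xs) = butlast (?f xs)"
  proof (cases "length xs \<le> k")
    case True
    then have "xs \<in> tree_vertices k" by (simp add: tree_vertices_def)
    moreover have "length (butlast xs) \<le> k" using True by simp
    ultimately show ?thesis
      using tree_aut_butlast[OF assms _ xs(2)] True by (simp add: tree_extend_def)
  next
    case False
    then have "length xs = Suc k" using xs by (simp add: tree_vertices_def)
    then show ?thesis by (simp add: tree_extend_def)
  qed
qed

definition tree_restrict :: "nat \<Rightarrow> (bool list \<Rightarrow> bool list) \<Rightarrow> bool list \<Rightarrow> bool list" where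
  "tree_restrict k g = (\<lambda>xs. if length xs \<le> k then g xs else xs)"

lemma tree_aut_restrict:
  assumes "tree_aut (Suc k) g" shows "tree_aut k (tree_restrict k g)"
  unfolding tree_aut_def
proof (intro conjI ballI impI)
  have perm: "g permutes tree_vertices (Suc k)" using assms by (rule tree_aut_permutes)
  let ?f = "tree_restrict k g" and ?g = "tree_restrict k (finv g)"
  have lengths: "length (g x) = length x" "length (finv g x) = length x" for x
    using tree_aut_length[OF assms] tree_aut_length[OF tree_aut_inv[OF assms]] by auto
  have "bij_betw ?f (tree_vertices k) (tree_vertices k)"
    by (rule bij_betw_byWitness[where f' = ?g])
      (auto simp: lengths tree_vertices_def tree_restrict_def permutes_inverses[OF perm])
  moreover have "?f x = x" if "x \<notin> tree_vertices k" for x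
    using that by (simp add: tree_restrict_def tree_vertices_def)
  ultimately show "?f permutes tree_vertices k" by (rule bij_imp_permutes)
  fix xs assume xs: "xs \<in> tree_vertices k" "xs \<noteq> []"
  then have "xs \<in> tree_vertices (Suc k)" by (simp add: tree_vertices_def)
  then show "?f (butlast xs) = butlast (?f xs)"
    using tree_aut_butlast[OF assms _ xs(2)] xs by (auto simp: tree_restrict_def tree_vertices_def)
qed

lemma tree_extend_restrict:
  assumes "tree_aut (Suc k) g" shows "tree_extend k (vertex_label g) (tree_restrict k g) = g"
proof (rule ext)
  fix xs
  show "tree_extend k (vertex_label g) (tree_restrict k g) xs = g xs"
  proof (cases "length xs = Suc k")
    case True
    then obtain y b where "xs = y @ [b]" "length y = k" by (cases xs rule: rev_exhaust) auto
    then show ?thesis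
      using tree_aut_snoc[OF assms, of y b] by (simp add: tree_extend_def tree_restrict_def)
  next
    case False
    then show ?thesis using permutes_not_in[OF tree_aut_permutes[OF assms], of xs]
      by (simp add: tree_extend_def tree_restrict_def tree_vertices_def)
  qed
qed

lemma restrict_parity_kernel:
  assumes "g \<in> parity_kernel (Suc k)" shows "tree_restrict k g \<in> parity_kernel k"
proof -
  have g: "tree_aut (Suc k) g" using assms by (simp add: parity_kernel_def)
  have "level_parity (tree_restrict k g) i = level_parity g i" if "i < k" for i
    using that unfolding level_parity_def
    by (intro sum.cong) (auto simp: vertex_label_def tree_restrict_def tree_leaves_def)
  then show ?thesis using assms tree_aut_restrict[OF g] by (simp add: parity_kernel_def)
qed

section \<open>Commutators in the parity kernel\<close>

lemma finite_tree_leaves: "finite (tree_leaves k)"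
  using finite_lists_length_eq[of "UNIV :: bool set" k] by (simp add: tree_leaves_def)

lemma sum_tree_leaves_Suc:
  fixes F :: "bool list \<Rightarrow> 'a::comm_monoid_add"
  shows "(\<Sum>x\<in>tree_leaves (Suc k). F x) = (\<Sum>z\<in>tree_leaves k. F (z @ [False]) + F (z @ [True]))"
proof -
  let ?L = "(\<lambda>z. z @ [False]) ` tree_leaves k" and ?R = "(\<lambda>z. z @ [True]) ` tree_leaves k"
  have split: "tree_leaves (Suc k) = ?L \<union> ?R"
  proof
    show "tree_leaves (Suc k) \<subseteq> ?L \<union> ?R"
    proof
      fix x assume "x \<in> tree_leaves (Suc k)"
      then obtain z b where "x = z @ [b]" "length z = k"
        by (cases x rule: rev_exhaust) (auto simp: tree_leaves_def)
      then show "x \<in> ?L \<union> ?R" by (cases b) (auto simp: tree_leaves_def)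
    qed
  qed (auto simp: tree_leaves_def)
  have "(\<Sum>x\<in>tree_leaves (Suc k). F x) = (\<Sum>x\<in>?L. F x) + (\<Sum>x\<in>?R. F x)"
    unfolding split by (rule sum.union_disjoint) (auto simp: finite_tree_leaves)
  also have "\<dots> = (\<Sum>z\<in>tree_leaves k. F (z @ [False])) + (\<Sum>z\<in>tree_leaves k. F (z @ [True]))"
    by (simp add: sum.reindex inj_on_def)
  finally show ?thesis by (simp add: sum.distrib)
qed

text \<open>
  This is how the induction uses that m acts on level k as a single cycle: over \<int>/2, every
  labelling of level k with even sum is a coboundary u + u \<circ> m.
\<close>

definition all_even_coboundaries :: "nat \<Rightarrow> (bool list \<Rightarrow> bool list) \<Rightarrow> bool" where
  "all_even_coboundaries k m \<longleftrightarrow> (\<forall>t. (\<Sum>z\<in>tree_leaves k. (of_bool (t z) :: bit)) = 0 \<longrightarrow>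
      (\<exists>u :: bool list \<Rightarrow> bool. \<forall>z\<in>tree_leaves k. (u z \<noteq> u (m z)) = t z))"

lemma all_even_coboundariesE:
  assumes "all_even_coboundaries k m" "(\<Sum>z\<in>tree_leaves k. (of_bool (t z) :: bit)) = 0"
  obtains u :: "bool list \<Rightarrow> bool" where "\<forall>z\<in>tree_leaves k. (u z \<noteq> u (m z)) = t z"
  using assms by (auto simp: all_even_coboundaries_def)

lemma all_even_coboundaries_0: "all_even_coboundaries 0 id"
  unfolding all_even_coboundaries_def
proof (intro allI impI)
  fix t :: "bool list \<Rightarrow> bool"
  have leaves: "tree_leaves 0 = {[]}" by (auto simp: tree_leaves_def)
  assume "(\<Sum>z\<in>tree_leaves 0. (of_bool (t z) :: bit)) = 0"
  then have "\<not> t []" unfolding leaves by (cases "t []") simp_all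
  then show "\<exists>u :: bool list \<Rightarrow> bool. \<forall>z\<in>tree_leaves 0. (u z \<noteq> u (id z)) = t z"
    unfolding leaves by simp
qed

text \<open>
  Look for U (z @ [b]) = A z + b D z. The equations at z @ [False] and z @ [True] then amount to
  a coboundary equation for D and, given D, one for A. With D its complement also solves the
  D-equation, and complementing D changes the parity of the right-hand side of the A-equation
  by \<Sum> w = 1; so for one of the two choices the A-equation is solvable.
\<close>

lemma all_even_coboundaries_extend:
  assumes cob: "all_even_coboundaries k m"
    and odd_w: "(\<Sum>z\<in>tree_leaves k. (of_bool (w z) :: bit)) = 1"
  shows "all_even_coboundaries (Suc k) (tree_extend k w m)"
  unfolding all_even_coboundaries_def
proof (intro allI impI)
  fix T :: "bool list \<Rightarrow> bool"
  assume even_T: "(\<Sum>x\<in>tree_leaves (Suc k). (of_bool (T x) :: bit)) = 0"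
  define T' where "T' z = (T (z @ [False]) \<noteq> T (z @ [True]))" for z
  define rhs where "rhs D z = (T (z @ [False]) \<noteq> (w z \<and> D (m z)))" for D z
  define parity where "parity D = (\<Sum>z\<in>tree_leaves k. (of_bool (rhs D z) :: bit))" for D
  have "(\<Sum>z\<in>tree_leaves k. (of_bool (T' z) :: bit)) = 0"
    using even_T by (simp only: T'_def of_bool_neq_bit sum_tree_leaves_Suc)
  then obtain D0 :: "bool list \<Rightarrow> bool" where D0: "\<forall>z\<in>tree_leaves k. (D0 z \<noteq> D0 (m z)) = T' z"
    by (rule all_even_coboundariesE[OF cob])
  have flip: "parity (\<lambda>z. \<not> D0 z) = parity D0 + 1"
  proof -
    have pointwise: "(of_bool (rhs (\<lambda>z. \<not> D0 z) z) :: bit) = of_bool (rhs D0 z) + of_bool (w z)" for z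
      by (cases "T (z @ [False])"; cases "w z"; cases "D0 (m z)") (simp_all add: rhs_def)
    show ?thesis by (simp only: parity_def pointwise sum.distrib odd_w)
  qed
  obtain D :: "bool list \<Rightarrow> bool" where D: "\<forall>z\<in>tree_leaves k. (D z \<noteq> D (m z)) = T' z"
    and parity_D: "parity D = 0"
  proof (cases "parity D0 = 0")
    case True
    then show ?thesis using that[OF D0] by blast
  next
    case False
    then have "parity (\<lambda>z. \<not> D0 z) = 0" using flip by (cases "parity D0") simp_all
    then show ?thesis using that[of "\<lambda>z. \<not> D0 z"] D0 by simp
  qed
  from parity_D obtain A :: "bool list \<Rightarrow> bool" where A: "\<forall>z\<in>tree_leaves k. (A z \<noteq> A (m z)) = rhs D z"
    unfolding parity_def by (rule all_even_coboundariesE[OF cob])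
  define U where "U x = (A (butlast x) \<noteq> (last x \<and> D (butlast x)))" for x
  show "\<exists>U :: bool list \<Rightarrow> bool. \<forall>x\<in>tree_leaves (Suc k). (U x \<noteq> U (tree_extend k w m x)) = T x"
  proof (intro exI[of _ U] ballI)
    fix x assume "x \<in> tree_leaves (Suc k)"
    then obtain z b where x: "x = z @ [b]" and z: "z \<in> tree_leaves k"
      by (cases x rule: rev_exhaust) (auto simp: tree_leaves_def)
    have "tree_extend k w m x = m z @ [b \<noteq> w z]"
      using x z by (simp add: tree_extend_def tree_leaves_def)
    moreover have "(A z \<noteq> A (m z)) = (T (z @ [False]) \<noteq> (w z \<and> D (m z)))"
      using A z by (simp add: rhs_def)
    moreover have "(D z \<noteq> D (m z)) = (T (z @ [False]) \<noteq> T (z @ [True]))"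
      using D z by (simp add: T'_def)
    ultimately show "(U x \<noteq> U (tree_extend k w m x)) = T x"
      unfolding U_def x by (cases b) auto
  qed
qed

lemma tree_extend_commutator:
  assumes p: "tree_aut k p" and m: "tree_aut k m"
  shows "tree_extend k u p \<circ> tree_extend k w m \<circ> finv (tree_extend k u p) \<circ> finv (tree_extend k w m)
    = tree_extend k (\<lambda>y. let z = finv p (finv m y) in w (finv m y) \<noteq> (u z \<noteq> (w z \<noteq> u (m z))))
        (p \<circ> m \<circ> finv p \<circ> finv m)"
  by (simp only: tree_extend_inv[OF p] tree_extend_inv[OF m] tree_extend_comp[OF m]
      tree_extend_comp[OF tree_aut_inv[OF p]] tree_extend_comp[OF tree_aut_inv[OF m]] Let_def)

lemma commutator_extend:
  assumes p: "tree_aut k p" and m: "tree_aut k m" and cob: "all_even_coboundaries k m"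
    and g: "tree_aut (Suc k) g" and parity: "level_parity g k = 0"
    and restrict: "tree_restrict k g = p \<circ> m \<circ> finv p \<circ> finv m"
  obtains u where "g = tree_extend k u p \<circ> tree_extend k w m \<circ>
      finv (tree_extend k u p) \<circ> finv (tree_extend k w m)"
proof -
  (* Comparing the labels of g and of the commutator at m (p z) leaves exactly the equation
     u z + u (m z) = t z, whose right-hand side has sum level_parity g k + 2 \<Sum> w = 0. *)
  define t where "t z = (vertex_label g (m (p z)) \<noteq> (w (p z) \<noteq> w z))" for z
  let ?sum = "\<lambda>f. \<Sum>z\<in>tree_leaves k. (of_bool (f z) :: bit)"
  have "?sum t = ?sum (\<lambda>z. vertex_label g (m (p z))) + (?sum (\<lambda>z. w (p z)) + ?sum w)"
    by (simp only: t_def of_bool_neq_bit sum.distrib)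
  also have "?sum (\<lambda>z. vertex_label g (m (p z))) = level_parity g k"
    unfolding level_parity_def
    using sum.reindex_bij_betw[OF tree_aut_bij_leaves[OF tree_aut_comp[OF m p]]] by simp
  also have "?sum (\<lambda>z. w (p z)) = ?sum w"
    using sum.reindex_bij_betw[OF tree_aut_bij_leaves[OF p]] by simp
  also have "level_parity g k + (?sum w + ?sum w) = 0" using parity by simp
  finally obtain u :: "bool list \<Rightarrow> bool" where u: "\<forall>z\<in>tree_leaves k. (u z \<noteq> u (m z)) = t z"
    by (rule all_even_coboundariesE[OF cob])
  have "g = tree_extend k (vertex_label g) (p \<circ> m \<circ> finv p \<circ> finv m)"
    using tree_extend_restrict[OF g] unfolding restrict by simp
  also have "\<dots> = tree_extend k
      (\<lambda>y. let z = finv p (finv m y) in w (finv m y) \<noteq> (u z \<noteq> (w z \<noteq> u (m z))))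
      (p \<circ> m \<circ> finv p \<circ> finv m)"
  proof (rule tree_extend_cong)
    fix y assume y: "y \<in> tree_leaves k"
    define z where "z = finv p (finv m y)"
    have pz: "p z = finv m y"
      unfolding z_def using permutes_inverses(1)[OF tree_aut_permutes[OF p]] by simp
    then have mpz: "m (p z) = y" using permutes_inverses(1)[OF tree_aut_permutes[OF m]] by simp
    have "z \<in> tree_leaves k"
      using y tree_aut_length[OF tree_aut_inv[OF p]] tree_aut_length[OF tree_aut_inv[OF m]]
      by (simp add: z_def tree_leaves_def)
    then have "(u z \<noteq> u (m z)) = (vertex_label g y \<noteq> (w (p z) \<noteq> w z))"
      using u mpz by (simp add: t_def)
    then show "vertex_label g y
        = (let z = finv p (finv m y) in w (finv m y) \<noteq> (u z \<noteq> (w z \<noteq> u (m z))))"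
      unfolding Let_def z_def[symmetric] unfolding pz[symmetric] by auto
  qed
  also have "\<dots> = tree_extend k u p \<circ> tree_extend k w m \<circ>
      finv (tree_extend k u p) \<circ> finv (tree_extend k w m)"
    by (rule tree_extend_commutator[OF p m, symmetric])
  finally show thesis by (rule that)
qed

lemma parity_kernel_commutator:
  assumes "g \<in> parity_kernel k"
  obtains p m where "tree_aut k p" "tree_aut k m" "all_even_coboundaries k m"
    "g = p \<circ> m \<circ> finv p \<circ> finv m"
  using assms
proof (induction k arbitrary: g thesis)
  case 0
  then have "g = id" using tree_aut_0 by (simp add: parity_kernel_def)
  then show ?case using "0.prems"(1)[OF tree_aut_id tree_aut_id all_even_coboundaries_0] by simp
next
  case (Suc k)
  have g: "tree_aut (Suc k) g" and parity: "level_parity g k = 0"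
    using Suc.prems(2) by (auto simp: parity_kernel_def)
  obtain p m where p: "tree_aut k p" and m: "tree_aut k m" and cob: "all_even_coboundaries k m"
    and restrict: "tree_restrict k g = p \<circ> m \<circ> finv p \<circ> finv m"
    using Suc.IH restrict_parity_kernel[OF Suc.prems(2)] by blast
  define w where "w z = (z = replicate k False)" for z
  have "(\<Sum>z\<in>tree_leaves k. (of_bool (w z) :: bit)) = 1"
    using finite_tree_leaves[of k] by (simp add: w_def of_bool_def sum.delta' tree_leaves_def)
  then have "all_even_coboundaries (Suc k) (tree_extend k w m)"
    by (rule all_even_coboundaries_extend[OF cob])
  moreover obtain u where "g = tree_extend k u p \<circ> tree_extend k w m \<circ>
      finv (tree_extend k u p) \<circ> finv (tree_extend k w m)"
    by (rule commutator_extend[OF p m cob g parity restrict])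
  ultimately show ?case using Suc.prems(1) tree_aut_extend[OF p] tree_aut_extend[OF m] by blast
qed

section \<open>Commutators with an even automorphism\<close>

definition lift_perm :: "nat \<Rightarrow> (bool list \<Rightarrow> bool list) \<Rightarrow> bool list \<Rightarrow> bool list" where
  "lift_perm n s = (\<lambda>xs. if length xs = Suc n then s (butlast xs) @ [last xs] else xs)"

lemma lift_perm_id: "lift_perm n id = id"
proof (rule ext)
  fix xs show "lift_perm n id xs = id xs"
    by (cases xs rule: rev_exhaust) (auto simp: lift_perm_def)
qed

lemma lift_perm_transpose:
  assumes "a \<in> tree_leaves n" "b \<in> tree_leaves n"
  shows "lift_perm n (transpose a b \<circ> s) =
    transpose (a @ [False]) (b @ [False]) \<circ> transpose (a @ [True]) (b @ [True]) \<circ> lift_perm n s"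
proof (rule ext)
  fix xs
  show "lift_perm n (transpose a b \<circ> s) xs =
    (transpose (a @ [False]) (b @ [False]) \<circ> transpose (a @ [True]) (b @ [True]) \<circ> lift_perm n s) xs"
  proof (cases "length xs = Suc n")
    case True
    then obtain y c where "xs = y @ [c]" by (cases xs rule: rev_exhaust) auto
    then show ?thesis using True by (cases c) (auto simp: lift_perm_def transpose_def)
  next
    case False
    then show ?thesis using assms by (auto simp: lift_perm_def transpose_def tree_leaves_def)
  qed
qed

lemma evenperm_lift_perm:
  assumes "s permutes tree_leaves n"
  shows "permutation (lift_perm n s) \<and> evenperm (lift_perm n s)"
  using assms finite_tree_leaves[of n]
proof (induction s rule: permutes_induct)
  case id
  then show ?case using lift_perm_id[of n] by (simp add: id_def)
next
  case (swap a b p)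
  let ?t = "transpose (a @ [False]) (b @ [False]) \<circ> transpose (a @ [True]) (b @ [True])"
  have "permutation ?t" by (simp add: permutation_compose permutation_swap_id)
  moreover have "evenperm ?t"
    using swap(3) by (simp add: evenperm_comp permutation_swap_id evenperm_swap)
  ultimately show ?case
    unfolding lift_perm_transpose[OF swap(1,2)]
    using swap.IH by (metis evenperm_comp permutation_compose)
qed

lemma tree_extend_in_G:
  assumes m: "tree_aut k m" shows "tree_extend k (\<lambda>_. False) m \<in> G (Suc k)"
proof -
  have "leaf_action k m permutes tree_leaves k"
  proof (rule bij_imp_permutes)
    show "bij_betw (leaf_action k m) (tree_leaves k) (tree_leaves k)"
      using tree_aut_bij_leaves[OF m, of k] by (rule bij_betw_cong[THEN iffD1, rotated])
        (simp add: leaf_action_def)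
  qed (simp add: leaf_action_def)
  moreover have "leaf_action (Suc k) (tree_extend k (\<lambda>_. False) m) = lift_perm k (leaf_action k m)"
    by (auto simp: leaf_action_def tree_extend_def lift_perm_def tree_leaves_def)
  ultimately show ?thesis
    using evenperm_lift_perm tree_aut_extend[OF m] by (simp add: G_def B_def)
qed

lemma parity_kernel_Suc_commutator_G:
  assumes "g \<in> parity_kernel (Suc k)"
  obtains f l where "tree_aut (Suc k) f" "l \<in> G (Suc k)" "g = f \<circ> l \<circ> finv f \<circ> finv l"
proof -
  have g: "tree_aut (Suc k) g" and parity: "level_parity g k = 0"
    using assms by (auto simp: parity_kernel_def)
  obtain p m where p: "tree_aut k p" and m: "tree_aut k m" and cob: "all_even_coboundaries k m"
    and restrict: "tree_restrict k g = p \<circ> m \<circ> finv p \<circ> finv m"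
    using parity_kernel_commutator[OF restrict_parity_kernel[OF assms]] .
  obtain u where "g = tree_extend k u p \<circ> tree_extend k (\<lambda>_. False) m \<circ>
      finv (tree_extend k u p) \<circ> finv (tree_extend k (\<lambda>_. False) m)"
    by (rule commutator_extend[OF p m cob g parity restrict])
  then show thesis using that tree_aut_extend[OF p] tree_extend_in_G[OF m] by blast
qed

lemma (in group) commutator_in_derived:
  "a \<in> carrier G \<Longrightarrow> b \<in> carrier G \<Longrightarrow> a \<otimes> b \<otimes> inv a \<otimes> inv b \<in> derived G (carrier G)"
  unfolding derived_def by (blast intro: generate.incl)

lemma (in group) inv_commutator:
  "a \<in> carrier G \<Longrightarrow> b \<in> carrier G \<Longrightarrow> inv (a \<otimes> b \<otimes> inv a \<otimes> inv b) = b \<otimes> a \<otimes> inv b \<otimes> inv a"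
  by (simp add: inv_mult_group m_assoc)

lemma (in group) commutator_set_swap:
  assumes H: "subgroup H G" and "A \<subseteq> carrier G" "C \<subseteq> carrier G"
    and H_eq: "H = {a \<otimes> c \<otimes> inv a \<otimes> inv c | a c. a \<in> A \<and> c \<in> C}"
  shows "H = {c \<otimes> a \<otimes> inv c \<otimes> inv a | a c. a \<in> A \<and> c \<in> C}"
proof (intro equalityI subsetI)
  fix h assume h: "h \<in> H"
  then obtain a c where ac: "a \<in> A" "c \<in> C" and "inv h = a \<otimes> c \<otimes> inv a \<otimes> inv c"
    using subgroup.m_inv_closed[OF H h] H_eq by blast
  then have "h = c \<otimes> a \<otimes> inv c \<otimes> inv a"
    using subgroup.mem_carrier[OF H h] assms(2,3) by (metis inv_inv inv_commutator subsetD)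
  then show "h \<in> {c \<otimes> a \<otimes> inv c \<otimes> inv a | a c. a \<in> A \<and> c \<in> C}" using ac by blast
next
  fix h assume "h \<in> {c \<otimes> a \<otimes> inv c \<otimes> inv a | a c. a \<in> A \<and> c \<in> C}"
  then obtain a c where ac: "a \<in> A" "c \<in> C" and "h = c \<otimes> a \<otimes> inv c \<otimes> inv a" by blast
  then have "h = inv (a \<otimes> c \<otimes> inv a \<otimes> inv c)" using assms(2,3) by (simp add: inv_commutator subsetD)
  moreover have "a \<otimes> c \<otimes> inv a \<otimes> inv c \<in> H" using ac H_eq by blast
  ultimately show "h \<in> H" using subgroup.m_inv_closed[OF H] by simp
qed

lemma derived_B_eq_commutators_G:
  assumes "k \<ge> 1"
  shows "derived (B k) (carrier (B k)) = {comm k f l | f l. f \<in> carrier (B k) \<and> l \<in> G k}"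
proof (intro equalityI subsetI)
  fix g assume "g \<in> derived (B k) (carrier (B k))"
  moreover obtain k' where "k = Suc k'" using assms by (cases k) auto
  ultimately obtain f l where f: "tree_aut k f" and l: "l \<in> G k" and "g = f \<circ> l \<circ> finv f \<circ> finv l"
    using derived_B_subset_parity_kernel parity_kernel_Suc_commutator_G by blast
  moreover have "tree_aut k l" using l by (simp add: G_def B_def)
  ultimately have "g = comm k f l" using f by (simp add: comm_B)
  then show "g \<in> {comm k f l | f l. f \<in> carrier (B k) \<and> l \<in> G k}"
    using f l by (auto simp: B_def)
next
  fix g assume "g \<in> {comm k f l | f l. f \<in> carrier (B k) \<and> l \<in> G k}"
  then show "g \<in> derived (B k) (carrier (B k))"
    using group.commutator_in_derived[OF group_B] by (auto simp: comm_def G_def)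
qed

theorem theorem3:
  fixes k :: nat
  assumes "k \<ge> 1"
  shows "derived (B k) (carrier (B k)) = {comm k f l | f l. f \<in> carrier (B k) \<and> l \<in> G k}
       \<and> derived (B k) (carrier (B k)) = {comm k l f | f l. f \<in> carrier (B k) \<and> l \<in> G k}"
proof
  show first: "derived (B k) (carrier (B k)) = {comm k f l | f l. f \<in> carrier (B k) \<and> l \<in> G k}"
    using assms by (rule derived_B_eq_commutators_G)
  interpret group "B k" by (rule group_B)
  show "derived (B k) (carrier (B k)) = {comm k l f | f l. f \<in> carrier (B k) \<and> l \<in> G k}"
    using commutator_set_swap[OF derived_is_subgroup _ _ first[unfolded comm_def]]
    unfolding comm_def by (auto simp: G_def)
qed

end
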